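(* The lattice width of a Delzant polytope $\Delta\subseteq\mathbb{R}^d$ coincides with its facet width.
   Context: A Delzant polytope is a full-dimensional polytope $\Delta\subseteq\mathbb{R}^d$ whose normal fan consists of unimodular cones, i.e. at each vertex the primitive inner normals of the incident facets form a basis of $(\mathbb{Z}^d)^*$. For $u\ne0$, $\mathrm{width}_u(\Delta)=\max_{x,y\in\Delta}|u(x)-u(y)|$. The lattice width is $\min_{u\in(\mathbb{Z}^d)^*\setminus\{0\}}\mathrm{width}_u(\Delta)$; the facet width is the minimum of $\mathrm{width}_u(\Delta)$ over the primitive facet normals $u\in(\mathbb{Z}^d)^*$ of $\Delta$. *)

theory Defs
  imports "HOL-Analysis.Analysis"
begin

text \<open>Lattice functionals: elements of the dual lattice, represented by integer
  coefficient vectors u, acting on real^'d by u(x) = sum_i u_i x_i.\<close>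

definition lfun :: "int ^ 'd \<Rightarrow> real ^ 'd \<Rightarrow> real" where
  "lfun u x = (\<Sum>i\<in>UNIV. real_of_int (u $ i) * x $ i)"

definition primitive :: "int ^ 'd \<Rightarrow> bool" where
  "primitive u \<longleftrightarrow> u \<noteq> 0 \<and> (\<forall>k::int. (\<forall>i. k dvd u $ i) \<longrightarrow> \<bar>k\<bar> = 1)"

definition primitive_inner_normal :: "(real ^ 'd) set \<Rightarrow> (real ^ 'd) set \<Rightarrow> int ^ 'd \<Rightarrow> bool" where
  "primitive_inner_normal P F u \<longleftrightarrow>
     primitive u \<and> F = {x \<in> P. \<forall>y\<in>P. lfun u x \<le> lfun u y}"

definition incident_normals :: "(real ^ 'd) set \<Rightarrow> real ^ 'd \<Rightarrow> (int ^ 'd) set" where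
  "incident_normals P v = {u. \<exists>F. F facet_of P \<and> v \<in> F \<and> primitive_inner_normal P F u}"

definition delzant :: "(real ^ 'd) set \<Rightarrow> bool" where
  "delzant P \<longleftrightarrow> polytope P \<and> interior P \<noteq> {} \<and>
     (\<forall>F. F facet_of P \<longrightarrow> (\<exists>u. primitive_inner_normal P F u)) \<and>
     (\<forall>v. v extreme_point_of P \<longrightarrow>
        (\<exists>b :: 'd \<Rightarrow> int ^ 'd. bij_betw b UNIV (incident_normals P v) \<and>
            \<bar>det (\<chi> i j. b i $ j)\<bar> = 1))"

definition width_dir :: "int ^ 'd \<Rightarrow> (real ^ 'd) set \<Rightarrow> real" where
  "width_dir u P = (SUP xy\<in>P \<times> P. \<bar>lfun u (fst xy) - lfun u (snd xy)\<bar>)"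

definition lattice_width :: "(real ^ 'd) set \<Rightarrow> real" where
  "lattice_width P = (INF u\<in>{u::int ^ 'd. u \<noteq> 0}. width_dir u P)"

definition facet_width :: "(real ^ 'd) set \<Rightarrow> real" where
  "facet_width P = (INF u\<in>{u. \<exists>F. F facet_of P \<and> primitive_inner_normal P F u}. width_dir u P)"

end

theory Submission
  imports Defs
begin

text \<open>Let u be a nonzero integral functional and v a vertex of P at which u is minimal. The
primitive normals u_1, ..., u_d of the facets through v form a lattice basis, so
u = c_1 u_1 + ... + c_d u_d with integers c_i. Moving from v along the edge on which all u_i but
u_k are constant stays inside P and cannot decrease u, hence c_k \<ge> 0; as u \<noteq> 0, some c_j \<ge> 1.
Since every u_i - u_i(v) is nonnegative on P, we get 0 \<le> u_j - u_j(v) \<le> u - u(v) on P, so the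
width of P in the facet direction u_j is at most its width in direction u.\<close>

lemma cINF_eq_if_dominated:
  fixes f :: "'a \<Rightarrow> 'b::conditionally_complete_linorder"
  assumes "B \<subseteq> A" "A \<noteq> {}" "bdd_below (f ` A)" and dom: "\<And>a. a \<in> A \<Longrightarrow> \<exists>b\<in>B. f b \<le> f a"
  shows "(INF a\<in>A. f a) = (INF b\<in>B. f b)"
proof (rule order.antisym)
  have "B \<noteq> {}" using assms(2) dom by blast
  then show "(INF a\<in>A. f a) \<le> (INF b\<in>B. f b)"
    by (rule cINF_superset_mono[OF _ assms(3,1)]) simp
  have bdd_B: "bdd_below (f ` B)" using assms(3) by (rule bdd_below_mono) (use assms(1) in blast)
  show "(INF b\<in>B. f b) \<le> (INF a\<in>A. f a)"
  proof (rule cINF_greatest[OF assms(2)])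
    fix a assume "a \<in> A"
    then obtain b where "b \<in> B" "f b \<le> f a" using dom by blast
    have "(INF b\<in>B. f b) \<le> f b" using bdd_B \<open>b \<in> B\<close> by (rule cINF_lower)
    then show "(INF b\<in>B. f b) \<le> f a" using \<open>f b \<le> f a\<close> by (rule order_trans)
  qed
qed

lemma eq_scaleR_if_inner_kernel_subset:
  fixes a w :: "'a::real_inner"
  assumes "\<And>z. a \<bullet> z = 0 \<Longrightarrow> w \<bullet> z = 0"
  shows "w = (w \<bullet> a / (a \<bullet> a)) *\<^sub>R a"
proof -
  define z where "z = w - (w \<bullet> a / (a \<bullet> a)) *\<^sub>R a"
  have "a \<bullet> z = 0"
    by (cases "a = 0") (simp_all add: z_def inner_diff_right inner_commute)
  then have "w \<bullet> z = 0" using assms by blast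
  then have "z \<bullet> z = 0"
    using \<open>a \<bullet> z = 0\<close> by (simp add: z_def inner_diff_left)
  then show ?thesis by (simp add: z_def)
qed

lemma facet_minimizer_eq_neg_scaleR:
  fixes P :: "'a::euclidean_space set"
  assumes int: "interior P \<noteq> {}" and fac: "G facet_of P"
    and G_eq: "G = P \<inter> {x. a \<bullet> x = c}" and P_sub: "P \<subseteq> {x. a \<bullet> x \<le> c}" and "a \<noteq> 0"
    and G_min: "G = {x\<in>P. \<forall>y\<in>P. w \<bullet> x \<le> w \<bullet> y}"
  shows "\<exists>l<0. w = l *\<^sub>R a"
proof -
  obtain g where gG: "g \<in> G" using fac by (auto simp: facet_of_def)
  have ag: "a \<bullet> g = c" using gG G_eq by auto
  have "aff_dim G = int DIM('a) - 1"
    using fac aff_dim_nonempty_interior[OF int] by (simp add: facet_of_def)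
  moreover have "affine hull G \<subseteq> {x. a \<bullet> x = c}"
    by (rule hull_minimal) (use G_eq affine_hyperplane in auto)
  ultimately have hull_G: "affine hull G = {x. a \<bullet> x = c}"
    using gG \<open>a \<noteq> 0\<close> by (intro affine_dim_equal) (auto simp: hull_inc affine_hyperplane)
  have "G \<subseteq> {x. w \<bullet> x = w \<bullet> g}"
    using gG G_min by (auto intro: order.antisym)
  then have w_const: "affine hull G \<subseteq> {x. w \<bullet> x = w \<bullet> g}"
    by (rule hull_minimal) (rule affine_hyperplane)
  have "w \<bullet> z = 0" if "a \<bullet> z = 0" for z
  proof -
    have "g + z \<in> affine hull G" using hull_G ag that by (simp add: inner_add_right)
    then have "w \<bullet> (g + z) = w \<bullet> g" using w_const by blast
    then show ?thesis by (simp add: inner_add_right)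
  qed
  then have w_eq: "w = (w \<bullet> a / (a \<bullet> a)) *\<^sub>R a" (is "w = ?l *\<^sub>R a")
    by (rule eq_scaleR_if_inner_kernel_subset)
  \<comment> \<open>An interior point p has a \<bullet> p < c but w \<bullet> p \<ge> w \<bullet> g, so the factor is nonpositive.\<close>
  obtain p e where "e > 0" "ball p e \<subseteq> P" using int mem_interior by blast
  define q where "q = p + (e / 2 / norm a) *\<^sub>R a"
  have "q \<in> P" using \<open>e > 0\<close> \<open>ball p e \<subseteq> P\<close> \<open>a \<noteq> 0\<close> by (auto simp: q_def dist_norm)
  then have "a \<bullet> p + (e / 2 / norm a) * (a \<bullet> a) \<le> c"
    using P_sub by (auto simp: q_def inner_add_right)
  moreover have "(e / 2 / norm a) * (a \<bullet> a) > 0" using \<open>e > 0\<close> \<open>a \<noteq> 0\<close> by simp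
  ultimately have "a \<bullet> p < c" by linarith
  moreover have "w \<bullet> g \<le> w \<bullet> p"
    using gG G_min \<open>ball p e \<subseteq> P\<close> \<open>e > 0\<close> centre_in_ball by blast
  ultimately have "?l \<le> 0"
    using w_eq ag by (smt (verit, ccfv_SIG) inner_scaleR_left mult_le_cancel_left)
  moreover have "?l \<noteq> 0"
  proof
    assume "?l = 0"
    then have "G = P" using G_min w_eq by auto
    then show False using fac by simp
  qed
  ultimately have "?l < 0" by linarith
  with w_eq show ?thesis by blast
qed

lemma polyhedron_feasible_direction:
  fixes P :: "'a::euclidean_space set"
  assumes "polyhedron P" and int: "interior P \<noteq> {}" and "v \<in> P"
    and inward: "\<And>F. F facet_of P \<Longrightarrow> v \<in> F \<Longrightarrow>
                   \<exists>w. F = {x\<in>P. \<forall>y\<in>P. w \<bullet> x \<le> w \<bullet> y} \<and> 0 \<le> w \<bullet> e"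
  shows "\<exists>t>0. v + t *\<^sub>R e \<in> P"
proof -
  obtain H where "finite H" and seq: "P = affine hull P \<inter> \<Inter>H"
    and "\<And>h. h \<in> H \<Longrightarrow> \<exists>a b. a \<noteq> 0 \<and> h = {x. a \<bullet> x \<le> b}"
    and min: "\<And>H'. H' \<subset> H \<Longrightarrow> P \<subset> affine hull P \<inter> \<Inter>H'"
    using \<open>polyhedron P\<close> by (simp add: polyhedron_Int_affine_minimal) meson
  then obtain a b where ab: "\<And>h. h \<in> H \<Longrightarrow> a h \<noteq> 0 \<and> h = {x. a h \<bullet> x \<le> b h}"
    by metis
  have "P = \<Inter>H" using seq affine_hull_nonempty_interior[OF int] by simp
  also have "\<dots> = {x. \<forall>h\<in>H. a h \<bullet> x \<le> b h}" using ab by auto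
  finally have P_eq: "P = {x. \<forall>h\<in>H. a h \<bullet> x \<le> b h}" .
  have ev: "\<forall>\<^sub>F t in at_right 0. a h \<bullet> (v + t *\<^sub>R e) \<le> b h" if "h \<in> H" for h
  proof (cases "a h \<bullet> v = b h")
    case True
    define G where "G = P \<inter> {x. a h \<bullet> x = b h}"
    have "G facet_of P"
      using facet_of_polyhedron_explicit[OF \<open>finite H\<close> seq ab min] \<open>h \<in> H\<close> G_def by blast
    moreover have "v \<in> G" using True \<open>v \<in> P\<close> by (simp add: G_def)
    ultimately obtain w where G_min: "G = {x\<in>P. \<forall>y\<in>P. w \<bullet> x \<le> w \<bullet> y}" and "0 \<le> w \<bullet> e"
      using inward by blast
    moreover have "P \<subseteq> {x. a h \<bullet> x \<le> b h}" using P_eq \<open>h \<in> H\<close> by blast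
    ultimately obtain l where "l < 0" "w = l *\<^sub>R a h"
      using facet_minimizer_eq_neg_scaleR[OF int \<open>G facet_of P\<close> G_def] ab \<open>h \<in> H\<close> by blast
    with \<open>0 \<le> w \<bullet> e\<close> have "a h \<bullet> e \<le> 0" by (simp add: zero_le_mult_iff)
    then have below: "a h \<bullet> (v + t *\<^sub>R e) \<le> b h" if "t > 0" for t
      using True that by (simp add: inner_add_right mult_nonneg_nonpos)
    show ?thesis using eventually_at_right_less by (rule eventually_mono) (rule below)
  next
    case False
    have "a h \<bullet> v \<le> b h" using \<open>v \<in> P\<close> P_eq \<open>h \<in> H\<close> by blast
    with False have slack: "a h \<bullet> v < b h" by simp
    have "((\<lambda>t. a h \<bullet> (v + t *\<^sub>R e)) \<longlongrightarrow> a h \<bullet> (v + 0 *\<^sub>R e)) (at_right 0)"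
      by (intro tendsto_intros)
    then have "((\<lambda>t. a h \<bullet> (v + t *\<^sub>R e)) \<longlongrightarrow> a h \<bullet> v) (at_right 0)"
      by simp
    then show ?thesis
      using order_tendstoD(2) slack by (fastforce elim: eventually_mono)
  qed
  have "\<forall>\<^sub>F t in at_right 0. \<forall>h\<in>H. a h \<bullet> (v + t *\<^sub>R e) \<le> b h"
    using \<open>finite H\<close> by (rule eventually_ball_finite) (use ev in blast)
  then have "\<forall>\<^sub>F t in at_right 0. 0 < t \<and> v + t *\<^sub>R e \<in> P"
    using eventually_at_right_less by eventually_elim (simp add: P_eq)
  then show ?thesis using eventually_happens' trivial_limit_at_right_real by blast
qed

lemma extreme_point_minimizing_inner:
  fixes S :: "'a::euclidean_space set"
  assumes "compact S" "convex S" "S \<noteq> {}"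
  obtains v where "v extreme_point_of S" "\<And>y. y \<in> S \<Longrightarrow> a \<bullet> v \<le> a \<bullet> y"
proof -
  have "continuous_on S (\<lambda>x. a \<bullet> x)" by (intro continuous_intros)
  then obtain m where "m \<in> S" and m_min: "\<forall>y\<in>S. a \<bullet> m \<le> a \<bullet> y"
    using continuous_attains_inf[OF assms(1,3)] by blast
  define T where "T = S \<inter> {x. a \<bullet> x = a \<bullet> m}"
  have "T face_of S"
    unfolding T_def by (rule face_of_Int_supporting_hyperplane_ge) (use assms(2) m_min in auto)
  moreover have "compact T"
    unfolding T_def using assms(1) by (rule compact_Int_closed) (rule closed_hyperplane)
  moreover have "T \<noteq> {}" using \<open>m \<in> S\<close> T_def by auto
  ultimately obtain v where "v extreme_point_of T"
    using extreme_point_exists_convex face_of_imp_convex by blast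
  then show ?thesis
    using that extreme_point_of_face[OF \<open>T face_of S\<close>] m_min by (auto simp: T_def)
qed

definition of_int_vec :: "int ^ 'n \<Rightarrow> real ^ 'n" where
  "of_int_vec u = (\<chi> i. of_int (u $ i))"

lemma lfun_eq_inner: "lfun u x = of_int_vec u \<bullet> x"
  by (simp add: lfun_def of_int_vec_def inner_vec_def)

lemma lfun_axis: "lfun u (axis i 1) = of_int (u $ i)"
  by (simp add: lfun_eq_inner of_int_vec_def inner_axis)

definition of_int_rows :: "('n \<Rightarrow> int ^ 'n) \<Rightarrow> real ^ 'n ^ 'n" where
  "of_int_rows B = (\<chi> i. of_int_vec (B i))"

lemma of_int_rows_mult_vec: "(of_int_rows B *v x) $ i = lfun (B i) x"
  by (simp add: of_int_rows_def matrix_vector_mult_def lfun_def of_int_vec_def)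

lemma det_of_int_matrix: "det (\<chi> i j. (of_int (M $ i $ j) :: 'a::comm_ring_1)) = of_int (det M)"
  by (simp add: det_def of_int_sum of_int_mult of_int_prod)

lemma det_of_int_rows: "det (of_int_rows B) = of_int (det (\<chi> i j. B i $ j))"
  using det_of_int_matrix[of "\<chi> i j. B i $ j"] by (simp add: of_int_rows_def of_int_vec_def)

lemma unimodular_int_combination:
  fixes B :: "'n::finite \<Rightarrow> int ^ 'n"
  assumes unimod: "\<bar>det (\<chi> i j. B i $ j)\<bar> = 1"
  obtains c :: "'n \<Rightarrow> int" where "\<And>x. lfun u x = (\<Sum>i\<in>UNIV. of_int (c i) * lfun (B i) x)"
proof -
  let ?R = "transpose (of_int_rows B)"
  have det_R: "det ?R = of_int (det (\<chi> i j. B i $ j))"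
    by (simp add: det_of_int_rows)
  define a where "a = (\<chi> k. det (\<chi> i j. if j = k then of_int_vec u $ i else ?R $ i $ j) / det ?R)"
  have "det ?R \<noteq> 0" using unimod det_R by auto
  then have "?R *v a = of_int_vec u" by (subst cramer) (simp_all add: a_def)
  then have a_sol: "a v* of_int_rows B = of_int_vec u" by simp
  \<comment> \<open>By Cramer's rule each coefficient is an integer determinant divided by det B = \<plusminus>1.\<close>
  have a_int: "a $ k \<in> \<int>" for k
  proof -
    define M where "M = (\<chi> i j. if j = k then u $ i else B j $ i)"
    have "(\<chi> i j. if j = k then of_int_vec u $ i else ?R $ i $ j) = (\<chi> i j. (of_int (M $ i $ j) :: real))"
      by (simp add: M_def of_int_rows_def of_int_vec_def transpose_def vec_eq_iff)
    then have "a $ k = of_int (det M) / of_int (det (\<chi> i j. B i $ j))"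
      by (simp only: a_def det_R det_of_int_matrix vec_lambda_beta)
    moreover have "det (\<chi> i j. B i $ j) = 1 \<or> det (\<chi> i j. B i $ j) = -1"
      using unimod by linarith
    ultimately show ?thesis by auto
  qed
  define c where "c k = \<lfloor>a $ k\<rfloor>" for k
  have c: "a $ k = of_int (c k)" for k
    using a_int[of k] by (auto simp: c_def elim: Ints_cases)
  have "lfun u x = (\<Sum>i\<in>UNIV. of_int (c i) * lfun (B i) x)" for x
  proof -
    have "lfun u x = (a v* of_int_rows B) \<bullet> x" by (simp add: a_sol lfun_eq_inner)
    also have "\<dots> = a \<bullet> (of_int_rows B *v x)" by (rule dot_lmul_matrix)
    also have "\<dots> = (\<Sum>i\<in>UNIV. of_int (c i) * lfun (B i) x)"
      by (simp add: inner_vec_def c of_int_rows_mult_vec)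
    finally show ?thesis .
  qed
  then show ?thesis using that by blast
qed

lemma nonsingular_dual_vector:
  fixes B :: "'n::finite \<Rightarrow> int ^ 'n"
  assumes "det (\<chi> i j. B i $ j) \<noteq> 0"
  obtains e where "\<And>i. lfun (B i) e = (if i = k then 1 else 0)"
proof -
  have "det (of_int_rows B) \<noteq> 0" using assms by (simp add: det_of_int_rows)
  then obtain e where "of_int_rows B *v e = axis k 1"
    using cramer by blast
  then have "lfun (B i) e = axis k 1 $ i" for i
    using of_int_rows_mult_vec[of B e i] by simp
  then have "lfun (B i) e = (if i = k then 1 else 0)" for i by (simp add: axis_def)
  then show ?thesis by (rule that)
qed

lemma lfun_eq_zero_iff: "(\<forall>x. lfun u x = 0) \<longleftrightarrow> u = 0"
proof
  assume "\<forall>x. lfun u x = 0"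
  then have "real_of_int (u $ i) = 0" for i using lfun_axis[of u i] by simp
  then show "u = 0" by (simp add: vec_eq_iff)
qed (simp add: lfun_def)

lemma incident_normal_minimal:
  assumes "w \<in> incident_normals P v" "y \<in> P"
  shows "lfun w v \<le> lfun w y"
  using assms by (auto simp: incident_normals_def primitive_inner_normal_def)

lemma delzant_feasible_direction:
  fixes P :: "(real ^ 'd) set"
  assumes D: "delzant P" and "v \<in> P"
    and inward: "\<And>w. w \<in> incident_normals P v \<Longrightarrow> 0 \<le> lfun w e"
  shows "\<exists>t>0. v + t *\<^sub>R e \<in> P"
proof (rule polyhedron_feasible_direction)
  show "polyhedron P" "interior P \<noteq> {}"
    using D by (auto simp: delzant_def polytope_imp_polyhedron)
  show "v \<in> P" by fact
  fix F assume F: "F facet_of P" "v \<in> F"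
  then obtain w where w: "primitive_inner_normal P F w"
    using D by (auto simp: delzant_def)
  with F have "w \<in> incident_normals P v" by (auto simp: incident_normals_def)
  then show "\<exists>w. F = {x\<in>P. \<forall>y\<in>P. w \<bullet> x \<le> w \<bullet> y} \<and> 0 \<le> w \<bullet> e"
    using w inward by (intro exI[of _ "of_int_vec w"]) (auto simp: primitive_inner_normal_def lfun_eq_inner)
qed

lemma delzant_vertex_coefficient_nonneg:
  fixes P :: "(real ^ 'd) set"
  assumes D: "delzant P" and "v \<in> P" and u_min: "\<And>y. y \<in> P \<Longrightarrow> lfun u v \<le> lfun u y"
    and b: "bij_betw b UNIV (incident_normals P v)" "det (\<chi> i j. b i $ j) \<noteq> 0"
    and c: "\<And>x. lfun u x = (\<Sum>i\<in>UNIV. of_int (c i) * lfun (b i) x)"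
  shows "0 \<le> c k"
proof -
  \<comment> \<open>Move from v along the edge on which all normals at v but the k-th stay constant.\<close>
  obtain e where e: "\<And>i. lfun (b i) e = (if i = k then 1 else 0)"
    using nonsingular_dual_vector[OF b(2)] by blast
  have inward: "0 \<le> lfun w e" if "w \<in> incident_normals P v" for w
  proof -
    have "w \<in> range b" using that bij_betw_imp_surj_on[OF b(1)] by simp
    then obtain i where "w = b i" by blast
    then show ?thesis by (simp add: e)
  qed
  obtain t where "t > 0" "v + t *\<^sub>R e \<in> P"
    using delzant_feasible_direction[OF D \<open>v \<in> P\<close> inward] by blast
  then have "lfun u v \<le> lfun u (v + t *\<^sub>R e)" using u_min by blast
  then have "0 \<le> t * lfun u e" by (simp add: lfun_eq_inner inner_add_right)
  moreover have "lfun u e = of_int (c k)"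
    using c[of e] by (simp add: e mult.commute[of _ "if _ then _ else _"] if_distrib cong: if_cong)
  ultimately show ?thesis using \<open>t > 0\<close> by (simp add: zero_le_mult_iff)
qed

lemma delzant_dominated_facet_normal:
  fixes P :: "(real ^ 'd) set" and u :: "int ^ 'd"
  assumes D: "delzant P" and "u \<noteq> 0"
  obtains w F v where "F facet_of P" "primitive_inner_normal P F w" "v \<in> P"
    "\<And>y. y \<in> P \<Longrightarrow> lfun w v \<le> lfun w y"
    "\<And>x. x \<in> P \<Longrightarrow> lfun w x - lfun w v \<le> lfun u x - lfun u v"
proof -
  have "compact P" "convex P" "P \<noteq> {}"
    using D interior_subset by (auto simp: delzant_def polytope_imp_compact polytope_imp_convex)
  then obtain v where v: "v extreme_point_of P" and "\<And>y. y \<in> P \<Longrightarrow> of_int_vec u \<bullet> v \<le> of_int_vec u \<bullet> y"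
    by (rule extreme_point_minimizing_inner[where a = "of_int_vec u"]) blast
  then have u_min: "\<And>y. y \<in> P \<Longrightarrow> lfun u v \<le> lfun u y" by (simp add: lfun_eq_inner)
  have "v \<in> P" using v by (simp add: extreme_point_of_def)
  obtain b where b: "bij_betw b UNIV (incident_normals P v)" "\<bar>det (\<chi> i j. b i $ j)\<bar> = 1"
    using D v by (auto simp: delzant_def)
  then have b_normal: "b i \<in> incident_normals P v" for i by (auto simp: bij_betw_def)
  obtain c where c: "\<And>x. lfun u x = (\<Sum>i\<in>UNIV. of_int (c i) * lfun (b i) x)"
    using unimodular_int_combination[OF b(2)] by blast
  have c_nonneg: "0 \<le> c i" for i
    using delzant_vertex_coefficient_nonneg[OF D \<open>v \<in> P\<close> u_min b(1) _ c] b(2) by auto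
  have "\<exists>j. c j \<noteq> 0"
  proof (rule ccontr)
    assume "\<nexists>j. c j \<noteq> 0"
    then have "\<forall>x. lfun u x = 0" using c by simp
    with \<open>u \<noteq> 0\<close> show False by (simp add: lfun_eq_zero_iff)
  qed
  then obtain j where "c j \<noteq> 0" by blast
  with c_nonneg[of j] have "1 \<le> c j" by linarith
  have dom: "lfun (b j) x - lfun (b j) v \<le> lfun u x - lfun u v" if "x \<in> P" for x
  proof -
    have gap: "0 \<le> lfun (b i) x - lfun (b i) v" for i
      using incident_normal_minimal[OF b_normal that] by simp
    have "(1::real) \<le> of_int (c j)" using \<open>1 \<le> c j\<close> by simp
    from mult_right_mono[OF this gap[of j]]
    have "lfun (b j) x - lfun (b j) v \<le> of_int (c j) * (lfun (b j) x - lfun (b j) v)"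
      by simp
    also have "\<dots> \<le> (\<Sum>i\<in>UNIV. of_int (c i) * (lfun (b i) x - lfun (b i) v))"
      by (rule member_le_sum) (use c_nonneg gap in \<open>auto intro!: mult_nonneg_nonneg\<close>)
    also have "\<dots> = lfun u x - lfun u v"
      by (simp add: c right_diff_distrib sum_subtractf)
    finally show ?thesis .
  qed
  obtain F where F: "F facet_of P" "primitive_inner_normal P F (b j)"
    using b_normal[of j] by (auto simp: incident_normals_def)
  show ?thesis
    by (rule that[OF F \<open>v \<in> P\<close> incident_normal_minimal[OF b_normal] dom])
qed

lemma bdd_above_width_values:
  fixes P :: "(real ^ 'd) set"
  assumes "bounded P"
  shows "bdd_above ((\<lambda>xy. \<bar>lfun u (fst xy) - lfun u (snd xy)\<bar>) ` (P \<times> P))"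
proof -
  obtain B where B: "\<And>x. x \<in> P \<Longrightarrow> norm x \<le> B" using assms bounded_iff by blast
  have "\<bar>lfun u x - lfun u y\<bar> \<le> norm (of_int_vec u) * (B + B)" if "x \<in> P" "y \<in> P" for x y
  proof -
    have "\<bar>lfun u x - lfun u y\<bar> = \<bar>of_int_vec u \<bullet> (x - y)\<bar>"
      by (simp add: lfun_eq_inner inner_diff_right)
    also have "\<dots> \<le> norm (of_int_vec u) * norm (x - y)" by (rule Cauchy_Schwarz_ineq2)
    also have "\<dots> \<le> norm (of_int_vec u) * (B + B)"
      using B[OF that(1)] B[OF that(2)] norm_triangle_ineq4[of x y] by (intro mult_left_mono) auto
    finally show ?thesis .
  qed
  then show ?thesis by (intro bdd_aboveI[where M = "norm (of_int_vec u) * (B + B)"]) auto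
qed

lemma width_dir_upper:
  assumes "bounded P" "x \<in> P" "y \<in> P"
  shows "\<bar>lfun u x - lfun u y\<bar> \<le> width_dir u P"
  unfolding width_dir_def
  using cSUP_upper[OF _ bdd_above_width_values[OF assms(1)], of "(x, y)"] assms by auto

lemma width_dir_least:
  assumes "P \<noteq> {}" "\<And>x y. x \<in> P \<Longrightarrow> y \<in> P \<Longrightarrow> \<bar>lfun u x - lfun u y\<bar> \<le> c"
  shows "width_dir u P \<le> c"
  unfolding width_dir_def by (rule cSUP_least) (use assms in auto)

lemma width_dir_nonneg:
  assumes "bounded P" "x \<in> P"
  shows "0 \<le> width_dir u P"
  using width_dir_upper[OF assms assms(2), of u] by simp

lemma width_dir_le_if_dominated:
  assumes "bounded P" "v \<in> P" and w_min: "\<And>y. y \<in> P \<Longrightarrow> lfun w v \<le> lfun w y"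
    and dom: "\<And>x. x \<in> P \<Longrightarrow> lfun w x - lfun w v \<le> lfun u x - lfun u v"
  shows "width_dir w P \<le> width_dir u P"
proof (rule width_dir_least)
  show "P \<noteq> {}" using \<open>v \<in> P\<close> by blast
  fix x y assume "x \<in> P" "y \<in> P"
  \<comment> \<open>Since v minimises w, w x - w y \<le> w x - w v \<le> u x - u v, and symmetrically.\<close>
  have "lfun w x - lfun w y \<le> lfun u x - lfun u v" "lfun w y - lfun w x \<le> lfun u y - lfun u v"
    using dom w_min \<open>x \<in> P\<close> \<open>y \<in> P\<close> by (smt (verit))+
  moreover have "lfun u x - lfun u v \<le> width_dir u P" "lfun u y - lfun u v \<le> width_dir u P"
    using width_dir_upper[OF \<open>bounded P\<close> _ \<open>v \<in> P\<close>] \<open>x \<in> P\<close> \<open>y \<in> P\<close> by (smt (verit))+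
  ultimately show "\<bar>lfun w x - lfun w y\<bar> \<le> width_dir u P" by linarith
qed

theorem lemma3p9:
  fixes P :: "(real ^ 'd) set"
  assumes "delzant P"
  shows "lattice_width P = facet_width P"
  unfolding lattice_width_def facet_width_def
proof (rule cINF_eq_if_dominated)
  have "bounded P" and "P \<noteq> {}"
    using assms interior_subset by (auto simp: delzant_def polytope_imp_bounded)
  show "{u. \<exists>F. F facet_of P \<and> primitive_inner_normal P F u} \<subseteq> {u. u \<noteq> 0}"
    by (auto simp: primitive_inner_normal_def primitive_def)
  show "{u::int ^ 'd. u \<noteq> 0} \<noteq> {}"
    by (auto simp: vec_eq_iff intro!: exI[of _ 1])
  show "bdd_below ((\<lambda>u. width_dir u P) ` {u. u \<noteq> 0})"
    using width_dir_nonneg[OF \<open>bounded P\<close>] \<open>P \<noteq> {}\<close> by (intro bdd_belowI[where m = 0]) blast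
  fix u :: "int ^ 'd" assume "u \<in> {u. u \<noteq> 0}"
  then have "u \<noteq> 0" by simp
  then obtain w F v where F: "F facet_of P" "primitive_inner_normal P F w" and "v \<in> P"
    and w_min: "\<And>y. y \<in> P \<Longrightarrow> lfun w v \<le> lfun w y"
    and dom: "\<And>x. x \<in> P \<Longrightarrow> lfun w x - lfun w v \<le> lfun u x - lfun u v"
    by (rule delzant_dominated_facet_normal[OF assms]) blast
  have "width_dir w P \<le> width_dir u P"
    using \<open>bounded P\<close> \<open>v \<in> P\<close> w_min dom by (rule width_dir_le_if_dominated)
  with F show "\<exists>w\<in>{u. \<exists>F. F facet_of P \<and> primitive_inner_normal P F u}. width_dir w P \<le> width_dir u P"
    by blast
qed

end
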